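(* There are absolute constants $C,c>0$ such that for every $n$-point metric space $(X,d)$ and every $\Delta>0$, with $\beta=C\log n$, there is a probability distribution $\mu$ over partitions of $X$ satisfying: (a) for all $\Pi\in\mathrm{supp}(\mu)$ and all $S\in\Pi$, $\mathrm{diam}(S)\le\Delta$; (b) for all $x,y\in X$, $\Pr_{\Pi\sim\mu}[\Pi(x)\neq\Pi(y)]\le \beta d(x,y)/\Delta$; (c) for every shortest path $P$ with $d(P)\le\Delta/\beta$ and every $t\ge1$, $\Pr_{\Pi\sim\mu}[Z_P>t]\le 2e^{-ct}$.
   Context: For a partition $\Pi$ of $X$ and $x\in X$, $\Pi(x)$ denotes the cluster of $\Pi$ containing $x$. A shortest path between $x_0,x_\ell\in X$ is a sequence $P=(x_0,x_1,\dots,x_\ell)$ of points of $X$ with $\sum_{i=1}^{\ell}d(x_{i-1},x_i)=d(x_0,x_\ell)$; its length is $d(P)=d(x_0,x_\ell)$. $P$ meets a set $S$ if $S\cap P\neq\emptyset$. The degree of separation is $Z_P(\Pi)=\#\{S\in\Pi: P \text{ meets } S\}$. *)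

theory Defs
  imports "HOL-Probability.Probability"
begin

definition metric_on :: "'a set \<Rightarrow> ('a \<Rightarrow> 'a \<Rightarrow> real) \<Rightarrow> bool" where
  "metric_on X d \<longleftrightarrow>
     (\<forall>x\<in>X. \<forall>y\<in>X. 0 \<le> d x y \<and> (d x y = 0 \<longleftrightarrow> x = y) \<and> d x y = d y x) \<and>
     (\<forall>x\<in>X. \<forall>y\<in>X. \<forall>z\<in>X. d x z \<le> d x y + d y z)"

definition diam :: "('a \<Rightarrow> 'a \<Rightarrow> real) \<Rightarrow> 'a set \<Rightarrow> real" where
  "diam d S = Sup {d x y | x y. x \<in> S \<and> y \<in> S}"

definition cluster :: "'a set set \<Rightarrow> 'a \<Rightarrow> 'a set" where
  "cluster Part x = (THE S. S \<in> Part \<and> x \<in> S)"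

definition shortest_path :: "'a set \<Rightarrow> ('a \<Rightarrow> 'a \<Rightarrow> real) \<Rightarrow> 'a list \<Rightarrow> bool" where
  "shortest_path X d P \<longleftrightarrow> P \<noteq> [] \<and> set P \<subseteq> X \<and>
     (\<Sum>i<length P - 1. d (P ! i) (P ! Suc i)) = d (hd P) (last P)"

definition path_length :: "('a \<Rightarrow> 'a \<Rightarrow> real) \<Rightarrow> 'a list \<Rightarrow> real" where
  "path_length d P = d (hd P) (last P)"

definition degree_sep :: "'a list \<Rightarrow> 'a set set \<Rightarrow> nat" where
  "degree_sep P Part = card {S \<in> Part. S \<inter> set P \<noteq> {}}"

end

theory Submission
  imports Defs
begin

text \<open>The partition is produced by ball carving: the points are visited in an arbitrary order,
  and each cuts off, from the points not yet clustered, a ball whose radius is an independent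
  exponential variable of rate \<lambda> \<approx> log n / \<Delta>, discretised and truncated at \<Delta>/2, so that
  clusters have diameter at most \<Delta>. By memorylessness, once a ball reaches the nearer of two
  points x, y it misses the farther one with probability at most \<lambda> d(x,y); this gives the
  Lipschitz bound. For a short path P the same argument shows that a ball reaching P cuts it
  only with probability O(\<lambda> d(P)), which is small, and otherwise swallows the rest of P; an
  induction over the visited points then bounds the number of clusters meeting P by a
  geometric tail. Discretisation and truncation add an error of order 1/n^2 per ball, which
  is absorbed by \<beta> = C log n.\<close>

section \<open>Probability mass functions with finite support\<close>

lemma measure_bind_pmf_finite:
  assumes "finite (set_pmf M)"
  shows "measure_pmf.prob (bind_pmf M f) A = (\<Sum>x\<in>set_pmf M. pmf M x * measure_pmf.prob (f x) A)"
proof -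
  have "emeasure (measure_pmf (bind_pmf M f)) A = (\<integral>\<^sup>+x. emeasure (f x) A \<partial>M)"
    by (rule emeasure_bind_pmf)
  also have "\<dots> = (\<Sum>x\<in>set_pmf M. emeasure (f x) A * pmf M x)"
    by (rule nn_integral_measure_pmf_finite[OF assms]) auto
  also have "\<dots> = (\<Sum>x\<in>set_pmf M. ennreal (measure_pmf.prob (f x) A) * pmf M x)"
    by (simp add: measure_pmf.emeasure_eq_measure)
  also have "\<dots> = ennreal (\<Sum>x\<in>set_pmf M. pmf M x * measure_pmf.prob (f x) A)"
    by (subst sum_ennreal[symmetric]) (auto simp: ennreal_mult'' mult.commute)
  finally show ?thesis
    by (simp add: measure_pmf.emeasure_eq_measure sum_nonneg)
qed

lemma measure_pmf_finite_eq_sum_indicator: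
  assumes "finite (set_pmf M)"
  shows "measure_pmf.prob M A = (\<Sum>x\<in>set_pmf M. pmf M x * indicator A x)"
proof -
  have "measure_pmf.prob M A = measure_pmf.prob M (A \<inter> set_pmf M)"
    by (simp add: measure_Int_set_pmf)
  also have "\<dots> = sum (pmf M) (A \<inter> set_pmf M)"
    using assms by (simp add: measure_measure_pmf_finite)
  finally show ?thesis
    using assms by (simp add: sum.If_cases Int_commute indicator_def)
qed

lemma measure_pmf_cong_set_pmf:
  assumes "\<And>x. x \<in> set_pmf M \<Longrightarrow> x \<in> A \<longleftrightarrow> x \<in> B"
  shows "measure_pmf.prob M A = measure_pmf.prob M B"
proof -
  have "A \<inter> set_pmf M = B \<inter> set_pmf M" using assms by blast
  then show ?thesis by (metis measure_Int_set_pmf)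
qed

lemma measure_pmf_less_conv_ge:
  "measure_pmf.prob M {r::real. r < m} = 1 - measure_pmf.prob M {r. m \<le> r}"
proof -
  have "{r::real. r < m} = space (measure_pmf M) - {r. m \<le> r}" by auto
  then show ?thesis by (simp only: measure_pmf.prob_compl sets_measure_pmf UNIV_I)
qed

section \<open>Metrics, partitions and paths\<close>

lemma metric_on_refl: "metric_on X d \<Longrightarrow> x \<in> X \<Longrightarrow> d x x = 0"
  unfolding metric_on_def by blast

lemma
  assumes "metric_on X d" and "x \<in> X" "y \<in> X"
  shows metric_on_nonneg: "0 \<le> d x y"
    and metric_on_sym: "d x y = d y x"
    and metric_on_pos: "x \<noteq> y \<Longrightarrow> 0 < d x y"
  using assms unfolding metric_on_def by (auto simp: order_le_less)

lemma metric_on_triangle: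
  "metric_on X d \<Longrightarrow> x \<in> X \<Longrightarrow> y \<in> X \<Longrightarrow> z \<in> X \<Longrightarrow> d x z \<le> d x y + d y z"
  unfolding metric_on_def by blast

lemma metric_on_dist_diff_le:
  assumes "metric_on X d" "v \<in> X" "x \<in> X" "y \<in> X"
  shows "\<bar>d v x - d v y\<bar> \<le> d x y"
  using metric_on_triangle[OF assms(1) assms(2) assms(3) assms(4)]
    metric_on_triangle[OF assms(1) assms(2) assms(4) assms(3)] metric_on_sym[OF assms(1) assms(3,4)]
  by linarith

lemma metric_on_dist_le_add_of_close:
  assumes "metric_on X d" "v \<in> X" "q \<in> X" "q' \<in> X" "z \<in> X"
    and "d z q \<le> L" "d z q' \<le> L"
  shows "d v q \<le> d v q' + 2 * L"
  using metric_on_triangle[OF assms(1) assms(2) assms(4) assms(3)]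
    metric_on_triangle[OF assms(1) assms(4) assms(5) assms(3)]
    metric_on_sym[OF assms(1) assms(4,5)] assms(6,7)
  by linarith

lemma metric_on_finite_min_dist:
  assumes "finite X" "metric_on X d"
  obtains \<delta> where "0 < \<delta>" "\<And>x y. x \<in> X \<Longrightarrow> y \<in> X \<Longrightarrow> x \<noteq> y \<Longrightarrow> \<delta> \<le> d x y"
proof -
  define Ds where "Ds = insert 1 ((\<lambda>(x, y). d x y) ` {(x, y) \<in> X \<times> X. x \<noteq> y})"
  have "finite {(x, y) \<in> X \<times> X. x \<noteq> y}"
    by (rule finite_subset[of _ "X \<times> X"]) (use assms(1) in auto)
  then have "finite Ds" by (simp add: Ds_def)
  have "0 < Min Ds"
    using \<open>finite Ds\<close> metric_on_pos[OF assms(2)] by (auto simp: Ds_def)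
  moreover have "Min Ds \<le> d x y" if "x \<in> X" "y \<in> X" "x \<noteq> y" for x y
    using \<open>finite Ds\<close> that by (intro Min_le) (auto simp: Ds_def)
  ultimately show ?thesis using that by blast
qed

lemma diam_le_of_subset_ball:
  assumes "metric_on X d" "S \<subseteq> X" "S \<noteq> {}" "v \<in> X" "\<forall>x\<in>S. d v x \<le> r"
  shows "diam d S \<le> 2 * r"
  unfolding diam_def
proof (rule cSup_least)
  show "{d x y |x y. x \<in> S \<and> y \<in> S} \<noteq> {}" using \<open>S \<noteq> {}\<close> by auto
  fix z assume "z \<in> {d x y |x y. x \<in> S \<and> y \<in> S}"
  then obtain x y where z: "z = d x y" "x \<in> S" "y \<in> S" by auto
  with assms have "d x y \<le> d x v + d v y" by (intro metric_on_triangle[OF assms(1)]) auto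
  also have "\<dots> = d v x + d v y" using assms z metric_on_sym[OF assms(1)] by auto
  also have "\<dots> \<le> 2 * r" using assms(5) z(2,3) by (auto intro: add_mono[of _ r _ r, simplified])
  finally show "z \<le> 2 * r" using z by simp
qed

lemma shortest_path_dist_from_start:
  assumes sp: "shortest_path X d P" and m: "metric_on X d" and q: "q \<in> set P"
  shows "d (hd P) q \<le> path_length d P"
proof -
  have ne: "P \<noteq> []" and sub: "set P \<subseteq> X"
    and sum: "(\<Sum>i<length P - 1. d (P ! i) (P ! Suc i)) = d (hd P) (last P)"
    using sp unfolding shortest_path_def by auto
  have inX: "i < length P \<Longrightarrow> P ! i \<in> X" for i using sub by auto
  have prefix: "d (P ! 0) (P ! i) \<le> (\<Sum>j<i. d (P ! j) (P ! Suc j))" if "i < length P" for i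
    using that
  proof (induction i)
    case 0
    then show ?case using metric_on_refl[OF m inX[of 0]] by simp
  next
    case (Suc i)
    then have "d (P ! 0) (P ! Suc i) \<le> d (P ! 0) (P ! i) + d (P ! i) (P ! Suc i)"
      by (intro metric_on_triangle[OF m] inX) auto
    with Suc show ?case by simp
  qed
  obtain i where i: "i < length P" "q = P ! i" using q by (metis in_set_conv_nth)
  have "d (hd P) q \<le> (\<Sum>j<i. d (P ! j) (P ! Suc j))"
    using prefix[OF i(1)] i ne by (simp add: hd_conv_nth)
  also have "\<dots> \<le> (\<Sum>j<length P - 1. d (P ! j) (P ! Suc j))"
    using i by (intro sum_mono2) (auto intro!: metric_on_nonneg[OF m] inX)
  finally show ?thesis using sum by (simp add: path_length_def)
qed

lemma cluster_eqI:
  assumes "partition_on X Part" "B \<in> Part" "x \<in> B"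
  shows "cluster Part x = B"
  unfolding cluster_def
proof (rule the_equality)
  show "B \<in> Part \<and> x \<in> B" using assms by simp
  fix S assume "S \<in> Part \<and> x \<in> S"
  then show "S = B" using assms partition_onD2[OF assms(1)] unfolding disjoint_def by blast
qed

lemma cluster_neq_iff:
  assumes "partition_on X Part" "x \<in> X" "y \<in> X"
  shows "cluster Part x \<noteq> cluster Part y \<longleftrightarrow> (\<forall>B\<in>Part. x \<in> B \<longrightarrow> y \<notin> B)"
proof -
  obtain Bx By where "Bx \<in> Part" "x \<in> Bx" "By \<in> Part" "y \<in> By"
    using partition_onD1[OF assms(1)] assms(2,3) by blast
  then show ?thesis using cluster_eqI[OF assms(1)] by metis
qed

definition meeting_blocks :: "'a set set \<Rightarrow> 'a set \<Rightarrow> nat" where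
  "meeting_blocks P Q = card {B\<in>P. B \<inter> Q \<noteq> {}}"

lemma degree_sep_eq_meeting_blocks: "degree_sep P Part = meeting_blocks Part (set P)"
  by (simp add: degree_sep_def meeting_blocks_def)

lemma meeting_blocks_le_1_of_subset_singleton:
  assumes "partition_on X Part" "Q \<subseteq> {x}"
  shows "meeting_blocks Part Q \<le> 1"
proof (cases "{B\<in>Part. B \<inter> Q \<noteq> {}} = {}")
  case True
  then show ?thesis unfolding meeting_blocks_def True by simp
next
  case False
  then obtain B0 where B0: "B0 \<in> Part" "x \<in> B0" using assms(2) by blast
  have "{B\<in>Part. B \<inter> Q \<noteq> {}} \<subseteq> {B0}"
    using assms B0 partition_onD2[OF assms(1)] unfolding disjoint_def by blast
  then have "card {B\<in>Part. B \<inter> Q \<noteq> {}} \<le> card {B0}" by (intro card_mono) auto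
  then show ?thesis by (simp add: meeting_blocks_def)
qed

section \<open>Ball carving\<close>

definition add_block :: "'a set \<Rightarrow> 'a set set \<Rightarrow> 'a set set" where
  "add_block B P = (if B = {} then P else insert B P)"

text \<open>A point's cluster is cut out by the first centre, in list order, whose ball reaches it.\<close>

primrec carve :: "('a \<Rightarrow> 'a \<Rightarrow> real) \<Rightarrow> real pmf \<Rightarrow> 'a list \<Rightarrow> 'a set \<Rightarrow> 'a set set pmf" where
  "carve d rp [] R = return_pmf {}"
| "carve d rp (v # vs) R = bind_pmf rp (\<lambda>r.
     map_pmf (add_block {x\<in>R. d v x \<le> r}) (carve d rp vs (R - {x\<in>R. d v x \<le> r})))"

lemma set_pmf_carve_Cons:
  "P \<in> set_pmf (carve d rp (v # vs) R) \<longleftrightarrow>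
   (\<exists>r\<in>set_pmf rp. \<exists>P'\<in>set_pmf (carve d rp vs (R - {x\<in>R. d v x \<le> r})).
      P = add_block {x\<in>R. d v x \<le> r} P')"
  by auto

lemma measure_carve_Cons:
  assumes "finite (set_pmf rp)"
  shows "measure_pmf.prob (carve d rp (v # vs) R) E =
    (\<Sum>r\<in>set_pmf rp. pmf rp r * measure_pmf.prob (carve d rp vs (R - {x\<in>R. d v x \<le> r}))
       (add_block {x\<in>R. d v x \<le> r} -` E))"
  using assms by (simp add: measure_bind_pmf_finite)

lemma carve_block_subset_ball:
  assumes "P \<in> set_pmf (carve d rp vs R)" "B \<in> P"
  shows "B \<subseteq> R \<and> (\<exists>v\<in>set vs. \<exists>r\<in>set_pmf rp. B \<subseteq> {x. d v x \<le> r})"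
  using assms
proof (induction vs arbitrary: R P)
  case Nil
  then show ?case by simp
next
  case (Cons v vs)
  then obtain r P' where "r \<in> set_pmf rp"
    and P': "P' \<in> set_pmf (carve d rp vs (R - {x\<in>R. d v x \<le> r}))"
    and "P = add_block {x\<in>R. d v x \<le> r} P'"
    by (auto simp: set_pmf_carve_Cons)
  with Cons.prems Cons.IH[OF P'] show ?case
    by (auto simp: add_block_def split: if_splits)
qed

lemma partition_on_carve:
  assumes "P \<in> set_pmf (carve d rp vs R)" and "\<forall>r\<in>set_pmf rp. 0 \<le> r"
    and "\<forall>v\<in>R. d v v = 0" and "R \<subseteq> set vs"
  shows "partition_on R P"
  using assms
proof (induction vs arbitrary: R P)
  case Nil
  then show ?case by (simp add: partition_on_empty)
next
  case (Cons v vs)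
  then obtain r P' where r: "r \<in> set_pmf rp"
    and P': "P' \<in> set_pmf (carve d rp vs (R - {x\<in>R. d v x \<le> r}))"
    and P: "P = add_block {x\<in>R. d v x \<le> r} P'"
    by (auto simp: set_pmf_carve_Cons)
  define B where "B = {x\<in>R. d v x \<le> r}"
  have "R - B \<subseteq> set vs"
    using Cons.prems(2-4) r unfolding B_def by force
  then have IH: "partition_on (R - B) P'"
    using Cons.IH[OF P'[folded B_def]] Cons.prems(2,3) by auto
  show ?case
  proof (cases "B = {}")
    case True
    then show ?thesis using IH P by (simp add: add_block_def B_def[symmetric])
  next
    case False
    have "disjnt B (\<Union>P')"
      using carve_block_subset_ball[OF P'] by (auto simp: B_def disjnt_def)
    with False IH show ?thesis
      using P by (simp add: add_block_def partition_on_insert B_def[symmetric]) (auto simp: B_def)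
  qed
qed

lemma meeting_blocks_add_block:
  assumes "finite R" and "\<forall>B'\<in>P. B' \<subseteq> R - B"
  shows "meeting_blocks (add_block B P) Q = (if B \<inter> Q = {} then 0 else 1) + meeting_blocks P (Q - B)"
proof -
  have eq: "{B'\<in>P. B' \<inter> Q \<noteq> {}} = {B'\<in>P. B' \<inter> (Q - B) \<noteq> {}}"
    using assms(2) by blast
  have "finite P"
    using assms by (meson Diff_subset Pow_iff finite_Pow_iff finite_subset subsetI subset_trans)
  show ?thesis
  proof (cases "B = {}")
    case True
    then show ?thesis by (simp add: meeting_blocks_def add_block_def)
  next
    case False
    then have "B \<notin> P" using assms(2) by blast
    show ?thesis
    proof (cases "B \<inter> Q = {}")
      case True
      then have "{B'\<in>insert B P. B' \<inter> Q \<noteq> {}} = {B'\<in>P. B' \<inter> Q \<noteq> {}}" by auto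
      with False True eq show ?thesis by (simp add: meeting_blocks_def add_block_def)
    next
      case nonempty: False
      then have "{B'\<in>insert B P. B' \<inter> Q \<noteq> {}} = insert B {B'\<in>P. B' \<inter> Q \<noteq> {}}" by auto
      with False nonempty eq \<open>B \<notin> P\<close> \<open>finite P\<close> show ?thesis
        by (simp add: meeting_blocks_def add_block_def)
    qed
  qed
qed

section \<open>Separation probability and the tail along a path\<close>

text \<open>An exponential radius of rate \<kappa> satisfies this with e = 0 for every D (memorylessness).\<close>

definition nearly_memoryless :: "real pmf \<Rightarrow> real \<Rightarrow> real \<Rightarrow> real \<Rightarrow> bool" where
  "nearly_memoryless rp \<kappa> D e \<longleftrightarrow>
     (\<forall>a b. b - a \<le> D \<longrightarrow>
        measure_pmf.prob rp {r. a \<le> r \<and> r < b} \<le> \<kappa> * D * (measure_pmf.prob rp {r. a \<le> r} + e))"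

lemma carve_Cons_separation_pointwise:
  fixes d :: "'a \<Rightarrow> 'a \<Rightarrow> real" and R :: "'a set" and v x y :: 'a and F r :: real
  defines "Br \<equiv> {z\<in>R. d v z \<le> r}" and "E \<equiv> {P. \<forall>B\<in>P. x \<in> B \<longrightarrow> y \<notin> B}"
  assumes IH: "\<And>R'. x \<in> R' \<Longrightarrow> y \<in> R' \<Longrightarrow> x \<in> set vs \<Longrightarrow> y \<in> set vs \<Longrightarrow>
        measure_pmf.prob (carve d rp vs R') E \<le> F"
    and "0 \<le> r" "d x x = 0" "d y y = 0"
    and "x \<in> R" "y \<in> R" "x \<in> set (v # vs)" "y \<in> set (v # vs)"
  shows "measure_pmf.prob (carve d rp vs (R - Br)) (add_block Br -` E)
    \<le> indicator {r. min (d v x) (d v y) \<le> r \<and> r < max (d v x) (d v y)} r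
        + indicator {r. r < min (d v x) (d v y)} r * F"
proof -
  consider "r < min (d v x) (d v y)" | "min (d v x) (d v y) \<le> r \<and> r < max (d v x) (d v y)"
    | "max (d v x) (d v y) \<le> r"
    by linarith
  then show ?thesis
  proof cases
    case 1
    then have out: "x \<notin> Br" "y \<notin> Br" by (auto simp: Br_def)
    then have "x \<in> set vs" "y \<in> set vs"
      using assms(4-) by (auto simp: Br_def)
    have "measure_pmf.prob (carve d rp vs (R - Br)) (add_block Br -` E)
        = measure_pmf.prob (carve d rp vs (R - Br)) E"
      by (rule measure_pmf_cong_set_pmf) (use out in \<open>auto simp: E_def add_block_def\<close>)
    also have "\<dots> \<le> F"
      by (rule IH) (use out assms(7,8) \<open>x \<in> set vs\<close> \<open>y \<in> set vs\<close> in auto)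
    finally show ?thesis using 1 by (simp add: indicator_def)
  next
    case 2
    then show ?thesis by (auto simp: indicator_def min_le_iff_disj)
  next
    case 3
    then have "x \<in> Br" "y \<in> Br" using assms(7,8) by (auto simp: Br_def)
    then have "measure_pmf.prob (carve d rp vs (R - Br)) (add_block Br -` E) = 0"
      by (auto simp: measure_pmf_zero_iff E_def add_block_def)
    with 3 show ?thesis by (simp add: indicator_def)
  qed
qed

lemma carve_separation_prob:
  fixes \<kappa> D e :: real
  assumes fin: "finite (set_pmf rp)" and nonneg: "\<forall>r\<in>set_pmf rp. 0 \<le> r"
    and mem: "nearly_memoryless rp \<kappa> D e" and "0 \<le> e" and "0 \<le> \<kappa> * D"
    and "\<forall>v\<in>set vs. \<bar>d v x - d v y\<bar> \<le> D" and "d x x = 0" "d y y = 0"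
    and "x \<in> R" "y \<in> R" "x \<in> set vs" "y \<in> set vs"
  shows "measure_pmf.prob (carve d rp vs R) {P. \<forall>B\<in>P. x \<in> B \<longrightarrow> y \<notin> B}
           \<le> \<kappa> * D * (1 + length vs * e)"
  using assms(6-)
proof (induction vs arbitrary: R)
  case Nil
  then show ?case by simp
next
  case (Cons v vs)
  define E where "E = {P. \<forall>B\<in>P. x \<in> B \<longrightarrow> y \<notin> B}"
  define m where "m = min (d v x) (d v y)"
  define M where "M = max (d v x) (d v y)"
  define F where "F = \<kappa> * D * (1 + length vs * e)"
  define G where "G = measure_pmf.prob rp {r. m \<le> r}"
  let ?B = "\<lambda>r. {z\<in>R. d v z \<le> r}"
  have IH: "measure_pmf.prob (carve d rp vs R') E \<le> F"
    if "x \<in> R'" "y \<in> R'" "x \<in> set vs" "y \<in> set vs" for R'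
    unfolding E_def F_def using Cons.prems that by (intro Cons.IH) auto
  have "measure_pmf.prob (carve d rp (v # vs) R) E
      = (\<Sum>r\<in>set_pmf rp. pmf rp r * measure_pmf.prob (carve d rp vs (R - ?B r)) (add_block (?B r) -` E))"
    by (rule measure_carve_Cons[OF fin])
  also have "\<dots> \<le> (\<Sum>r\<in>set_pmf rp. pmf rp r * (indicator {r. m \<le> r \<and> r < M} r + indicator {r. r < m} r * F))"
    unfolding m_def M_def E_def using Cons.prems nonneg
    by (intro sum_mono mult_left_mono carve_Cons_separation_pointwise[OF IH[unfolded E_def]]) auto
  also have "\<dots> = measure_pmf.prob rp {r. m \<le> r \<and> r < M} + F * measure_pmf.prob rp {r. r < m}"
    by (simp add: measure_pmf_finite_eq_sum_indicator[OF fin] algebra_simps sum.distrib sum_distrib_left)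
  also have "\<dots> \<le> \<kappa> * D * (G + e) + F * (1 - G)"
  proof -
    have "M - m \<le> D" using Cons.prems(1) by (auto simp: M_def m_def)
    with mem have "measure_pmf.prob rp {r. m \<le> r \<and> r < M} \<le> \<kappa> * D * (G + e)"
      unfolding nearly_memoryless_def G_def by blast
    then show ?thesis by (simp add: measure_pmf_less_conv_ge G_def)
  qed
  also have "\<dots> = \<kappa> * D * (1 + length (v # vs) * e) - \<kappa> * D * (G * (length vs * e))"
    by (simp add: F_def algebra_simps)
  also have "\<dots> \<le> \<kappa> * D * (1 + length (v # vs) * e)"
    using \<open>0 \<le> e\<close> \<open>0 \<le> \<kappa> * D\<close> by (simp add: G_def)
  finally show ?case unfolding E_def .
qed

text \<open>The first ball misses Q, swallows Q, or cuts Q; cutting needs a radius in a window of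
  width D above the distance from the centre to Q, and costs one cluster.\<close>

lemma carve_Cons_meeting_blocks_pointwise:
  fixes d :: "'a \<Rightarrow> 'a \<Rightarrow> real" and R Q :: "'a set" and v :: 'a and A D t r :: real
  defines "Br \<equiv> {z\<in>R. d v z \<le> r}" and "m \<equiv> Min (d v ` Q)"
  assumes IH: "\<And>R' Q' s. Q' \<noteq> {} \<Longrightarrow> Q' \<subseteq> Q \<Longrightarrow> Q' \<subseteq> R' \<Longrightarrow> finite R' \<Longrightarrow>
        measure_pmf.prob (carve d rp vs R') {P. real (meeting_blocks P Q') > s} \<le> 2 * A * (1/2) powr s"
    and "1/2 \<le> A" and spread: "\<forall>q\<in>Q. \<forall>q'\<in>Q. d v q \<le> d v q' + D"
    and "Q \<noteq> {}" "Q \<subseteq> R" "finite R"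
  shows "measure_pmf.prob (carve d rp vs (R - Br)) (add_block Br -` {P. real (meeting_blocks P Q) > t})
    \<le> (1/2) powr t * (2 * indicator {r. m \<le> r} r + (4 * A - 2) * indicator {r. m \<le> r \<and> r < m + D} r
                        + 2 * A * indicator {r. r < m} r)"
proof -
  let ?C = "carve d rp vs (R - Br)"
  let ?u = "(1/2::real) powr t"
  have "finite Q" using \<open>Q \<subseteq> R\<close> \<open>finite R\<close> finite_subset by blast
  then obtain q0 where q0: "q0 \<in> Q" "d v q0 = m"
    unfolding m_def using \<open>Q \<noteq> {}\<close> by (metis (no_types, lifting) Min_in finite_imageI image_iff image_is_empty)
  have min: "m \<le> d v q" if "q \<in> Q" for q
    unfolding m_def using \<open>finite Q\<close> that by simp
  have hits: "Br \<inter> Q \<noteq> {} \<longleftrightarrow> m \<le> r"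
    using q0 min \<open>Q \<subseteq> R\<close> unfolding Br_def by (force dest: min)
  have shift: "meeting_blocks (add_block Br P') Q = (if m \<le> r then 1 else 0) + meeting_blocks P' (Q - Br)"
    if "P' \<in> set_pmf ?C" for P'
    using meeting_blocks_add_block[OF \<open>finite R\<close>, of P' Br Q] carve_block_subset_ball[OF that] hits
    by auto
  consider (covered) "m \<le> r" "Q \<subseteq> Br" | (cut) "m \<le> r" "\<not> Q \<subseteq> Br" | (missed) "r < m" by linarith
  then show ?thesis
  proof cases
    case covered
    then have "Q - Br = {}" by blast
    have "measure_pmf.prob ?C (add_block Br -` {P. real (meeting_blocks P Q) > t})
        = measure_pmf.prob ?C {P. 1 > t}"
      using covered shift \<open>Q - Br = {}\<close> by (intro measure_pmf_cong_set_pmf) (simp add: meeting_blocks_def)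
    also have "\<dots> \<le> 2 * ?u"
    proof (cases "t < 1")
      case True
      then have "(1/2::real) powr 1 \<le> ?u" by (intro powr_mono') auto
      with True show ?thesis by simp
    qed simp
    finally have "measure_pmf.prob ?C (add_block Br -` {P. real (meeting_blocks P Q) > t}) \<le> 2 * ?u" .
    moreover have "0 \<le> ?u * ((4 * A - 2) * indicator {r. m \<le> r \<and> r < m + D} r)"
      using \<open>1/2 \<le> A\<close> by simp
    ultimately show ?thesis using covered by (simp add: distrib_left)
  next
    case cut
    then obtain q where q: "q \<in> Q" "q \<notin> Br" by blast
    then have "r < d v q" using \<open>Q \<subseteq> R\<close> by (auto simp: Br_def)
    with spread q0 q have window: "r < m + D" by fastforce
    have "measure_pmf.prob ?C (add_block Br -` {P. real (meeting_blocks P Q) > t})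
        = measure_pmf.prob ?C {P. real (meeting_blocks P (Q - Br)) > t - 1}"
      by (rule measure_pmf_cong_set_pmf) (use cut shift in auto)
    also have "\<dots> \<le> 2 * A * (1/2) powr (t - 1)"
      by (rule IH) (use cut \<open>Q \<subseteq> R\<close> \<open>finite R\<close> in auto)
    also have "\<dots> = 4 * A * ?u" by (simp add: powr_diff)
    finally show ?thesis using cut window by (simp add: indicator_def algebra_simps)
  next
    case missed
    then have "Q - Br = Q" using hits by auto
    have "measure_pmf.prob ?C (add_block Br -` {P. real (meeting_blocks P Q) > t})
        = measure_pmf.prob ?C {P. real (meeting_blocks P Q) > t}"
      by (rule measure_pmf_cong_set_pmf) (use missed shift \<open>Q - Br = Q\<close> in auto)
    also have "\<dots> \<le> 2 * A * ?u"
      by (rule IH) (use \<open>Q - Br = Q\<close> \<open>Q \<noteq> {}\<close> \<open>Q \<subseteq> R\<close> \<open>finite R\<close> in auto)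
    finally show ?thesis using missed by (simp add: indicator_def algebra_simps)
  qed
qed

text \<open>Averaging the pointwise bound: weight 2 where the ball swallows Q (probability
  G - W), 4A where it cuts Q (probability W) and 2A where it misses Q (probability 1 - G).\<close>

lemma tail_recurrence_step:
  fixes A a e G W :: real
  assumes A: "5/4 \<le> A" "A + 2 * a * e \<le> 3/2" and a: "0 \<le> a" "a \<le> 1/6"
    and "0 \<le> e" "0 \<le> G" and W: "W \<le> a * (G + e)"
  shows "G + (2 * A - 1) * W + A * (1 - G) \<le> A + 2 * a * e"
proof -
  have "G + (2 * A - 1) * W + A * (1 - G) \<le> G + (2 * A - 1) * (a * (G + e)) + A * (1 - G)"
    using A W by (intro add_mono mult_left_mono) auto
  also have "\<dots> = A + G * ((2 * A - 1) * a - (A - 1)) + (2 * A - 1) * a * e"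
    by (simp add: algebra_simps)
  also have "\<dots> \<le> A + 0 + 2 * a * e"
  proof (intro add_mono)
    have "(2 * A - 1) * a \<le> (2 * A - 1) * (1/6)"
      using A a by (intro mult_left_mono) auto
    also have "\<dots> \<le> A - 1" using A by (simp add: algebra_simps)
    finally show "G * ((2 * A - 1) * a - (A - 1)) \<le> 0"
      using \<open>0 \<le> G\<close> by (simp add: mult_nonneg_nonpos)
    have "0 \<le> 2 * a * e" using a \<open>0 \<le> e\<close> by simp
    then have "2 * A - 1 \<le> 2" using A by linarith
    then show "(2 * A - 1) * a * e \<le> 2 * a * e"
      using a \<open>0 \<le> e\<close> by (intro mult_right_mono) simp_all
  qed simp
  finally show ?thesis by simp
qed

lemma carve_meeting_blocks_tail:
  fixes \<kappa> D e t :: real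
  assumes fin: "finite (set_pmf rp)" and mem: "nearly_memoryless rp \<kappa> D e"
    and "0 \<le> e" "0 \<le> \<kappa> * D" "\<kappa> * D \<le> 1/6"
    and "2 * (\<kappa> * D) * e * length vs \<le> 1/4"
    and "\<forall>v\<in>set vs. \<forall>q\<in>Q. \<forall>q'\<in>Q. d v q \<le> d v q' + D"
    and "Q \<noteq> {}" "Q \<subseteq> R" "finite R"
  shows "measure_pmf.prob (carve d rp vs R) {P. real (meeting_blocks P Q) > t}
           \<le> 2 * (5/4 + 2 * (\<kappa> * D) * e * length vs) * (1/2) powr t"
  using assms(6-)
proof (induction vs arbitrary: R Q t)
  case Nil
  show ?case
  proof (cases "t < 0")
    case True
    then have "(1/2::real) powr 0 \<le> (1/2) powr t" by (intro powr_mono') auto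
    then show ?thesis by (simp add: indicator_def)
  next
    case False
    then show ?thesis by (simp add: measure_pmf_zero_iff meeting_blocks_def)
  qed
next
  case (Cons v vs)
  define a where "a = \<kappa> * D"
  define A where "A = 5/4 + 2 * a * e * length vs"
  define m where "m = Min (d v ` Q)"
  define G where "G = measure_pmf.prob rp {r. m \<le> r}"
  define W where "W = measure_pmf.prob rp {r. m \<le> r \<and> r < m + D}"
  let ?u = "(1/2::real) powr t"
  have ae: "0 \<le> 2 * a * e" using \<open>0 \<le> e\<close> \<open>0 \<le> \<kappa> * D\<close> by (simp add: a_def)
  have "2 * a * e * length vs \<le> 2 * a * e * length (v # vs)"
    using ae by (intro mult_left_mono) auto
  with Cons.prems(1) have small: "2 * a * e * length vs \<le> 1/4" by (simp add: a_def)
  have "0 \<le> 2 * a * e * length vs" using ae by simp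
  then have A: "5/4 \<le> A" "A + 2 * a * e \<le> 3/2"
    using Cons.prems(1) by (auto simp: A_def a_def algebra_simps)
  have IH: "measure_pmf.prob (carve d rp vs R') {P. real (meeting_blocks P Q') > s} \<le> 2 * A * (1/2) powr s"
    if "Q' \<noteq> {}" "Q' \<subseteq> Q" "Q' \<subseteq> R'" "finite R'" for R' Q' s
    unfolding A_def a_def
  proof (rule Cons.IH)
    show "\<forall>v\<in>set vs. \<forall>q\<in>Q'. \<forall>q'\<in>Q'. d v q \<le> d v q' + D"
      using Cons.prems(2) that(2) by (meson list.set_intros(2) subsetD)
  qed (use small that in \<open>simp_all add: a_def\<close>)
  have "measure_pmf.prob (carve d rp (v # vs) R) {P. real (meeting_blocks P Q) > t}
      \<le> (\<Sum>r\<in>set_pmf rp. pmf rp r * (?u * (2 * indicator {r. m \<le> r} r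
            + (4 * A - 2) * indicator {r. m \<le> r \<and> r < m + D} r + 2 * A * indicator {r. r < m} r)))"
    unfolding measure_carve_Cons[OF fin] m_def using A Cons.prems
    by (intro sum_mono mult_left_mono carve_Cons_meeting_blocks_pointwise[OF IH]) auto
  also have "\<dots> = ?u * (2 * G + (4 * A - 2) * W + 2 * A * measure_pmf.prob rp {r. r < m})"
    unfolding G_def W_def
    by (simp add: measure_pmf_finite_eq_sum_indicator[OF fin] algebra_simps sum.distrib
        sum_distrib_left sum_subtractf)
  also have "\<dots> = 2 * ?u * (G + (2 * A - 1) * W + A * (1 - G))"
    by (simp add: measure_pmf_less_conv_ge G_def algebra_simps)
  also have "\<dots> \<le> 2 * ?u * (A + 2 * a * e)"
  proof -
    have "W \<le> a * (G + e)"
      using mem unfolding nearly_memoryless_def W_def G_def a_def by simp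
    with A \<open>0 \<le> e\<close> \<open>0 \<le> \<kappa> * D\<close> \<open>\<kappa> * D \<le> 1/6\<close>
    have "G + (2 * A - 1) * W + A * (1 - G) \<le> A + 2 * a * e"
      by (intro tail_recurrence_step) (simp_all add: a_def G_def)
    then show ?thesis by simp
  qed
  also have "\<dots> = 2 * (5/4 + 2 * (\<kappa> * D) * e * length (v # vs)) * ?u"
    by (simp add: A_def a_def algebra_simps)
  finally show ?case .
qed

section \<open>Discretised truncated exponential radii\<close>

lemma geometric_block_sum:
  fixes p :: real
  shows "(\<Sum>i\<in>{j..<j+n}. (1-p)^i * p) = (1-p)^j - (1-p)^(j+n)"
proof (induction n)
  case 0
  then show ?case by simp
next
  case (Suc n)
  have "{j..<j + Suc n} = insert (j + n) {j..<j + n}" by auto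
  with Suc show ?case by (simp add: algebra_simps)
qed

definition truncated_geometric_pmf :: "real \<Rightarrow> nat \<Rightarrow> nat pmf" where
  "truncated_geometric_pmf p K = cond_pmf (geometric_pmf p) {..K}"

lemma
  fixes p :: real
  assumes "0 < p" "p < 1"
  shows set_pmf_truncated_geometric: "set_pmf (truncated_geometric_pmf p K) = {..K}"
    and measure_truncated_geometric: "measure_pmf.prob (truncated_geometric_pmf p K) T
          = (\<Sum>i\<in>T \<inter> {..K}. (1-p)^i * p) / (1 - (1-p)^(K+1))"
proof -
  have ne: "set_pmf (geometric_pmf p) \<inter> {..K} \<noteq> {}"
    using assms by (simp add: set_pmf_geometric)
  show support: "set_pmf (truncated_geometric_pmf p K) = {..K}"
    unfolding truncated_geometric_pmf_def using assms
    by (simp add: set_pmf_geometric set_cond_pmf[OF ne])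
  have "measure_pmf.prob (geometric_pmf p) {..K} = sum (pmf (geometric_pmf p)) {..K}"
    by (simp add: measure_measure_pmf_finite)
  also have "\<dots> = (\<Sum>i\<in>{0..<0+(K+1)}. (1-p)^i * p)"
    using assms by (intro sum.cong) (auto simp: pmf_geometric)
  finally have mass: "measure_pmf.prob (geometric_pmf p) {..K} = 1 - (1-p)^(K+1)"
    by (simp only: geometric_block_sum) simp
  have "measure_pmf.prob (truncated_geometric_pmf p K) T
      = measure_pmf.prob (truncated_geometric_pmf p K) (T \<inter> {..K})"
    by (metis support measure_Int_set_pmf)
  also have "\<dots> = (\<Sum>i\<in>T \<inter> {..K}. (1-p)^i * p / (1 - (1-p)^(K+1)))"
    unfolding truncated_geometric_pmf_def using assms
    by (auto simp: measure_measure_pmf_finite pmf_cond[OF ne] mass pmf_geometric intro!: sum.cong)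
  finally show "measure_pmf.prob (truncated_geometric_pmf p K) T
      = (\<Sum>i\<in>T \<inter> {..K}. (1-p)^i * p) / (1 - (1-p)^(K+1))"
    by (simp add: sum_divide_distrib)
qed

lemma truncated_geometric_normaliser_pos:
  fixes p :: real
  assumes "0 < p" "p < 1"
  shows "0 < 1 - (1-p)^(K+1)"
  using assms power_Suc_less_one[of "1-p" K] by simp

lemma truncated_geometric_window:
  fixes p :: real
  assumes "0 < p" "p < 1"
  shows "measure_pmf.prob (truncated_geometric_pmf p K) {j..<j+n}
           \<le> n * p * (1-p)^j / (1 - (1-p)^(K+1))"
proof -
  have W: "0 < 1 - (1-p)^(K+1)" using truncated_geometric_normaliser_pos[OF assms] .
  have "measure_pmf.prob (truncated_geometric_pmf p K) {j..<j+n}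
      \<le> (\<Sum>i\<in>{j..<j+n}. (1-p)^i * p) / (1 - (1-p)^(K+1))"
    unfolding measure_truncated_geometric[OF assms]
    using W assms by (intro divide_right_mono sum_mono2) auto
  also have "\<dots> = (1-p)^j * (1 - (1-p)^n) / (1 - (1-p)^(K+1))"
    by (simp only: geometric_block_sum) (simp add: power_add algebra_simps)
  also have "\<dots> \<le> (1-p)^j * (n * p) / (1 - (1-p)^(K+1))"
  proof -
    have "1 + real n * (-p) \<le> (1 + (-p))^n"
      using assms by (intro Bernoulli_inequality) auto
    then show ?thesis using W assms by (intro divide_right_mono mult_left_mono) auto
  qed
  finally show ?thesis by (simp add: algebra_simps)
qed

lemma truncated_geometric_tail:
  fixes p :: real
  assumes "0 < p" "p < 1"
  shows "(1-p)^j / (1 - (1-p)^(K+1))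
           \<le> measure_pmf.prob (truncated_geometric_pmf p K) {j..} + (1-p)^(K+1) / (1 - (1-p)^(K+1))"
proof (cases "j \<le> K + 1")
  case True
  then have "{j..} \<inter> {..K} = {j..<j + (K + 1 - j)}" by auto
  then have "measure_pmf.prob (truncated_geometric_pmf p K) {j..}
      = ((1-p)^j - (1-p)^(j + (K + 1 - j))) / (1 - (1-p)^(K+1))"
    by (simp only: measure_truncated_geometric[OF assms] geometric_block_sum)
  with True show ?thesis by (simp add: diff_divide_distrib)
next
  case False
  then have "(1-p)^j \<le> (1-p)^(K+1)"
    using assms by (intro power_decreasing) auto
  then show ?thesis
    using truncated_geometric_normaliser_pos[OF assms, of K]
    by (simp add: divide_right_mono add_increasing)
qed

lemma le_grid_point_iff:
  fixes a h :: real
  assumes "0 < h"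
  shows "a \<le> h * real k \<longleftrightarrow> nat \<lceil>a / h\<rceil> \<le> k"
proof -
  have "a \<le> h * real k \<longleftrightarrow> a / h \<le> real k" using assms by (simp add: pos_divide_le_eq mult.commute)
  also have "\<dots> \<longleftrightarrow> nat \<lceil>a / h\<rceil> \<le> k" by (simp add: ceiling_le_iff nat_le_iff)
  finally show ?thesis .
qed

lemma grid_window_subset:
  fixes a b h D :: real
  assumes "0 < h" "b - a \<le> D"
  shows "{k. a \<le> h * real k \<and> h * real k < b} \<subseteq> {nat \<lceil>a / h\<rceil>..<nat \<lceil>a / h\<rceil> + nat \<lceil>D / h\<rceil>}"
proof
  fix k assume k: "k \<in> {k. a \<le> h * real k \<and> h * real k < b}"
  define j where "j = nat \<lceil>a / h\<rceil>"
  have "a \<le> h * real j" unfolding j_def by (subst le_grid_point_iff[OF assms(1)]) simp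
  with k assms(2) have "(real k - real j) * h < D" by (simp add: algebra_simps)
  then have "real k - real j < D / h" using assms(1) by (simp add: pos_less_divide_eq)
  moreover have "D / h \<le> real (nat \<lceil>D / h\<rceil>)" by (rule real_nat_ceiling_ge)
  ultimately have "real k < real (j + nat \<lceil>D / h\<rceil>)" by simp
  moreover have "j \<le> k" unfolding j_def using k le_grid_point_iff[OF assms(1), of a k] by blast
  ultimately show "k \<in> {j..<j + nat \<lceil>D / h\<rceil>}" by simp
qed

text \<open>The radius h k with k truncated geometric approximates an exponential radius of rate p/h;
  the factor 2 in the rate pays for the discretisation, the additive error for the truncation.\<close>

lemma nearly_memoryless_truncated_geometric_grid:
  fixes p h D :: real
  assumes p: "0 < p" "p < 1" and h: "0 < h" "h \<le> D"
  shows "nearly_memoryless (map_pmf (\<lambda>k. h * real k) (truncated_geometric_pmf p K))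
           (2 * p / h) D ((1-p)^(K+1) / (1 - (1-p)^(K+1)))"
  unfolding nearly_memoryless_def
proof (intro allI impI)
  fix a b :: real
  assume ab: "b - a \<le> D"
  let ?T = "truncated_geometric_pmf p K"
  define W where "W = 1 - (1-p)^(K+1)"
  define j where "j = nat \<lceil>a / h\<rceil>"
  define n where "n = nat \<lceil>D / h\<rceil>"
  have W: "0 < W" unfolding W_def using truncated_geometric_normaliser_pos[OF p] .
  have reach: "a \<le> h * real k \<longleftrightarrow> j \<le> k" for k
    unfolding j_def by (rule le_grid_point_iff[OF h(1)])
  have n: "real n \<le> 2 * D / h"
  proof -
    have "1 \<le> D / h" using h by simp
    then show ?thesis unfolding n_def using ceiling_correct[of "D / h"] by linarith
  qed
  have "measure_pmf.prob ?T {k. a \<le> h * real k \<and> h * real k < b} \<le> measure_pmf.prob ?T {j..<j+n}"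
    using grid_window_subset[OF h(1) ab] by (intro measure_pmf.finite_measure_mono) (simp_all add: j_def n_def)
  also have "\<dots> \<le> n * p * (1-p)^j / W"
    unfolding W_def by (rule truncated_geometric_window[OF p])
  also have "\<dots> = real n * (p * ((1-p)^j / W))" by simp
  also have "\<dots> \<le> (2 * D / h) * (p * ((1-p)^j / W))"
    using n W p by (intro mult_right_mono) auto
  also have "\<dots> \<le> (2 * D / h) * (p * (measure_pmf.prob ?T {j..} + (1-p)^(K+1) / W))"
    using truncated_geometric_tail[OF p, of j K] h p
    unfolding W_def by (intro mult_left_mono) auto
  also have "\<dots> = 2 * p / h * D * (measure_pmf.prob ?T {k. a \<le> h * real k} + (1-p)^(K+1) / W)"
    using reach by (simp add: atLeast_def)
  finally show "measure_pmf.prob (map_pmf (\<lambda>k. h * real k) ?T) {r. a \<le> r \<and> r < b}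
      \<le> 2 * p / h * D * (measure_pmf.prob (map_pmf (\<lambda>k. h * real k) ?T) {r. a \<le> r}
                          + (1-p)^(K+1) / (1 - (1-p)^(K+1)))"
    by (simp add: vimage_def W_def)
qed

lemma set_pmf_truncated_geometric_grid:
  fixes p h :: real
  assumes "0 < p" "p < 1" "0 < h"
  shows "finite (set_pmf (map_pmf (\<lambda>k. h * real k) (truncated_geometric_pmf p K)))"
    and "\<forall>r\<in>set_pmf (map_pmf (\<lambda>k. h * real k) (truncated_geometric_pmf p K)). 0 \<le> r \<and> r \<le> h * real K"
  using assms by (auto simp: set_pmf_truncated_geometric intro: mult_left_mono)

lemma truncation_mass_le:
  fixes p N :: real
  assumes "0 < p" "p < 1" "0 < N" and "2 * ln N \<le> p * (real K + 1)"
  shows "(1-p)^(K+1) \<le> 1 / N^2"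
proof -
  have "1 - p \<le> exp (-p)" using exp_ge_add_one_self[of "-p"] by simp
  then have "(1-p)^(K+1) \<le> exp (-p) ^ (K+1)" using assms by (intro power_mono) auto
  also have "\<dots> = exp (real (K+1) * (-p))" by (rule exp_of_nat_mult[symmetric])
  also have "\<dots> \<le> exp (- (2 * ln N))" using assms by (simp add: algebra_simps)
  also have "\<dots> = inverse (exp (2 * ln N))" by (rule exp_minus)
  also have "exp (2 * ln N) = N^2"
    using assms by (metis exp_ln ln_realpow of_nat_numeral zero_less_power)
  finally show ?thesis by (simp add: inverse_eq_divide)
qed

lemma truncation_ratio_le:
  fixes N \<epsilon> :: real
  assumes "2 \<le> N" "0 \<le> \<epsilon>" "\<epsilon> \<le> 1 / N^2"
  shows "\<epsilon> < 1" and "N * (\<epsilon> / (1 - \<epsilon>)) \<le> 1"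
proof -
  have "2 * N \<le> N * N" using assms by (intro mult_right_mono) auto
  then have "N + 1 \<le> N^2" using assms unfolding power2_eq_square by linarith
  then have "(N + 1) * \<epsilon> \<le> N^2 * (1 / N^2)" using assms by (intro mult_mono) auto
  also have "\<dots> = 1" using assms by simp
  finally have "(N + 1) * \<epsilon> \<le> 1" .
  moreover have "3 * \<epsilon> \<le> (N + 1) * \<epsilon>" using assms by (intro mult_right_mono) auto
  ultimately show "\<epsilon> < 1" by linarith
  with \<open>(N + 1) * \<epsilon> \<le> 1\<close> show "N * (\<epsilon> / (1 - \<epsilon>)) \<le> 1" by (simp add: field_simps)
qed

lemma exists_nearly_memoryless_radii:
  fixes N \<Delta> \<delta> :: real
  assumes N: "2 \<le> N" and "0 < \<Delta>" "0 < \<delta>"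
  obtains rp e where "finite (set_pmf rp)" "\<forall>r\<in>set_pmf rp. 0 \<le> r \<and> r \<le> \<Delta>/2"
    and "0 \<le> e" "N * e \<le> 1" and "\<And>D. \<delta> \<le> D \<Longrightarrow> nearly_memoryless rp (8 * ln N / \<Delta>) D e"
proof -
  txt \<open>The mesh h is at most \<delta>, so every window width D \<ge> \<delta> exceeds the mesh, and the
    truncation point K h \<le> \<Delta>/2 still leaves mass at most 1/N^2 beyond it.\<close>
  define rate where "rate = 4 * ln N / \<Delta>"
  define h where "h = min \<delta> (min (\<Delta>/2) (1 / (2 * rate)))"
  define p where "p = rate * h"
  define K where "K = nat \<lfloor>\<Delta> / (2 * h)\<rfloor>"
  define \<epsilon> where "\<epsilon> = (1-p)^(K+1)"
  have rate: "0 < rate" using N \<open>0 < \<Delta>\<close> by (simp add: rate_def)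
  have h: "0 < h" "h \<le> \<delta>" "h \<le> \<Delta>/2" "h \<le> 1 / (2 * rate)"
    using rate assms by (auto simp: h_def)
  have p: "0 < p" "p < 1"
  proof -
    show "0 < p" using rate h by (simp add: p_def)
    have "p \<le> rate * (1 / (2 * rate))" unfolding p_def using h rate by (intro mult_left_mono) auto
    then show "p < 1" using rate by simp
  qed
  have "real K = of_int \<lfloor>\<Delta> / (2 * h)\<rfloor>" unfolding K_def using h \<open>0 < \<Delta>\<close> by simp
  then have "real K \<le> \<Delta> / (2 * h)" "\<Delta> / (2 * h) \<le> real K + 1" by linarith+
  then have K: "h * real K \<le> \<Delta>/2" "\<Delta>/2 \<le> h * (real K + 1)"
    using h by (simp_all add: field_simps)
  define rp where "rp = map_pmf (\<lambda>k. h * real k) (truncated_geometric_pmf p K)"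
  have "rate * (\<Delta>/2) \<le> rate * (h * (real K + 1))" using K rate by (intro mult_left_mono) auto
  then have "2 * ln N \<le> p * (real K + 1)" using \<open>0 < \<Delta>\<close> by (simp add: rate_def p_def algebra_simps)
  then have "\<epsilon> \<le> 1 / N^2"
    unfolding \<epsilon>_def using N by (intro truncation_mass_le[OF p]) auto
  moreover have "0 \<le> \<epsilon>" using p by (simp add: \<epsilon>_def)
  ultimately have "\<epsilon> < 1" "N * (\<epsilon> / (1 - \<epsilon>)) \<le> 1"
    using truncation_ratio_le[OF N] by blast+
  with \<open>0 \<le> \<epsilon>\<close> have e: "0 \<le> \<epsilon> / (1 - \<epsilon>)" "N * (\<epsilon> / (1 - \<epsilon>)) \<le> 1"
    by simp_all
  show ?thesis
  proof (rule that[of rp "\<epsilon> / (1 - \<epsilon>)"])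
    show "finite (set_pmf rp)"
      unfolding rp_def by (rule set_pmf_truncated_geometric_grid[OF p h(1)])
    show "\<forall>r\<in>set_pmf rp. 0 \<le> r \<and> r \<le> \<Delta>/2"
      using set_pmf_truncated_geometric_grid(2)[OF p h(1), of K] K(1) unfolding rp_def by force
    show "0 \<le> \<epsilon> / (1 - \<epsilon>)" "N * (\<epsilon> / (1 - \<epsilon>)) \<le> 1" using e .
    fix D assume "\<delta> \<le> D"
    have "2 * p / h = 8 * ln N / \<Delta>" using h by (simp add: p_def rate_def)
    with nearly_memoryless_truncated_geometric_grid[OF p h(1), of D K] \<open>\<delta> \<le> D\<close> h
    show "nearly_memoryless rp (8 * ln N / \<Delta>) D (\<epsilon> / (1 - \<epsilon>))"
      by (simp add: rp_def \<epsilon>_def)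
  qed
qed

section \<open>The decomposition\<close>

lemma three_half_powr_le_exp:
  fixes t :: real
  assumes "1 \<le> t"
  shows "3 * (1/2) powr t \<le> 2 * exp (- ln (4/3) * t)"
proof -
  have "exp (- ln (4/3) * t) = (3/4) powr t"
    by (simp add: powr_def ln_div)
  moreover have "(1/2::real) powr t = (2/3) powr t * (3/4) powr t"
    by (simp add: powr_mult[symmetric])
  moreover have "(2/3::real) powr t \<le> 2/3"
    using powr_mono'[of 1 t "2/3::real"] assms by simp
  ultimately show ?thesis by (simp add: mult_right_mono)
qed

locale ball_carving =
  fixes X :: "'a set" and d :: "'a \<Rightarrow> 'a \<Rightarrow> real" and centres :: "'a list"
    and rp :: "real pmf" and \<kappa> \<delta> e :: real
  assumes metric: "metric_on X d"
    and centres: "set centres = X" "distinct centres"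
    and radii_finite: "finite (set_pmf rp)" and radii_nonneg: "\<forall>r\<in>set_pmf rp. 0 \<le> r"
    and mesh: "\<And>x y. x \<in> X \<Longrightarrow> y \<in> X \<Longrightarrow> x \<noteq> y \<Longrightarrow> \<delta> \<le> d x y"
    and memoryless: "\<And>D. \<delta> \<le> D \<Longrightarrow> nearly_memoryless rp \<kappa> D e"
    and error: "0 \<le> e" "card X * e \<le> 1"
    and rate_nonneg: "0 \<le> \<kappa>"
begin

abbreviation carving :: "'a set set pmf" where
  "carving \<equiv> carve d rp centres X"

lemma length_centres_mult_error: "length centres * e \<le> 1"
  using error centres distinct_card by metis

lemma partition_on_carving: "Part \<in> set_pmf carving \<Longrightarrow> partition_on X Part"
  using radii_nonneg metric_on_refl[OF metric] centres by (intro partition_on_carve) auto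

lemma carving_diam_le:
  assumes "Part \<in> set_pmf carving" "S \<in> Part" and "\<forall>r\<in>set_pmf rp. r \<le> \<rho>"
  shows "diam d S \<le> 2 * \<rho>"
proof -
  obtain v r where "v \<in> X" "r \<in> set_pmf rp" "S \<subseteq> {x. d v x \<le> r}" "S \<subseteq> X"
    using carve_block_subset_ball[OF assms(1,2)] centres by blast
  moreover have "S \<noteq> {}"
    using partition_onD3[OF partition_on_carving[OF assms(1)]] assms(2) by auto
  ultimately have "diam d S \<le> 2 * r" by (intro diam_le_of_subset_ball[OF metric]) blast+
  moreover have "r \<le> \<rho>" using assms(3) \<open>r \<in> set_pmf rp\<close> by blast
  ultimately show ?thesis by linarith
qed

lemma carving_separation_prob:
  assumes "x \<in> X" "y \<in> X"
  shows "measure_pmf.prob carving {Part. cluster Part x \<noteq> cluster Part y} \<le> 2 * \<kappa> * d x y"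
proof (cases "x = y")
  case True
  then show ?thesis using metric_on_refl[OF metric assms(1)] by simp
next
  case False
  define D where "D = d x y"
  have "\<delta> \<le> D" using mesh[OF assms False] by (simp add: D_def)
  have "0 \<le> D" using metric_on_nonneg[OF metric assms] by (simp add: D_def)
  have "measure_pmf.prob carving {Part. cluster Part x \<noteq> cluster Part y}
      = measure_pmf.prob carving {P. \<forall>B\<in>P. x \<in> B \<longrightarrow> y \<notin> B}"
    using cluster_neq_iff[OF partition_on_carving] assms by (intro measure_pmf_cong_set_pmf) simp
  also have "\<dots> \<le> \<kappa> * D * (1 + length centres * e)"
  proof (rule carve_separation_prob[OF radii_finite radii_nonneg memoryless[OF \<open>\<delta> \<le> D\<close>] error(1)])
    show "\<forall>v\<in>set centres. \<bar>d v x - d v y\<bar> \<le> D"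
      using metric_on_dist_diff_le[OF metric _ assms] centres by (simp add: D_def)
  qed (use rate_nonneg \<open>0 \<le> D\<close> metric_on_refl[OF metric] assms centres in auto)
  also have "\<dots> \<le> \<kappa> * D * 2"
    using length_centres_mult_error rate_nonneg \<open>0 \<le> D\<close> by (intro mult_left_mono) auto
  finally show ?thesis by (simp add: D_def algebra_simps)
qed

lemma carving_meeting_blocks_tail:
  assumes "Q \<subseteq> X" "x0 \<in> Q" and close: "\<forall>q\<in>Q. d x0 q \<le> L"
    and "\<delta> \<le> L" "\<kappa> * L \<le> 1/32"
  shows "measure_pmf.prob carving {Part. real (meeting_blocks Part Q) > t} \<le> 3 * (1/2) powr t"
proof -
  have "0 \<le> L" using \<open>\<delta> \<le> L\<close> close metric_on_refl[OF metric] assms(1,2) by force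
  then have "\<delta> \<le> 2 * L" using \<open>\<delta> \<le> L\<close> by simp
  have spread: "\<forall>v\<in>set centres. \<forall>q\<in>Q. \<forall>q'\<in>Q. d v q \<le> d v q' + 2 * L"
    using assms(1,2) centres close
    by (intro ballI metric_on_dist_le_add_of_close[OF metric, where z = x0]) auto
  have a: "0 \<le> \<kappa> * (2 * L)" "\<kappa> * (2 * L) \<le> 1/16"
    using rate_nonneg \<open>0 \<le> L\<close> \<open>\<kappa> * L \<le> 1/32\<close> by auto
  have "0 \<le> e * length centres" using error(1) by simp
  then have small: "2 * (\<kappa> * (2 * L)) * e * length centres \<le> 2 * (1/16) * 1"
    unfolding mult.assoc[of _ e] using a length_centres_mult_error
    by (intro mult_mono) (auto simp: mult.commute)
  have "measure_pmf.prob carving {Part. real (meeting_blocks Part Q) > t}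
      \<le> 2 * (5/4 + 2 * (\<kappa> * (2 * L)) * e * length centres) * (1/2) powr t"
    using a small radii_finite memoryless[OF \<open>\<delta> \<le> 2 * L\<close>] error(1) spread assms(1,2) centres
    by (intro carve_meeting_blocks_tail) auto
  also have "\<dots> \<le> 3 * (1/2) powr t"
    using small by (intro mult_right_mono) auto
  finally show ?thesis .
qed

lemma carving_degree_sep_tail:
  assumes P: "shortest_path X d P" and short: "\<kappa> * path_length d P \<le> 1/32" and "1 \<le> t"
  shows "measure_pmf.prob carving {Part. real (degree_sep P Part) > t} \<le> 2 * exp (- ln (4/3) * t)"
proof -
  define Q where "Q = set P"
  define x0 where "x0 = hd P"
  have "Q \<subseteq> X" "x0 \<in> Q" using P by (auto simp: shortest_path_def Q_def x0_def)
  have close: "\<forall>q\<in>Q. d x0 q \<le> path_length d P"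
    using shortest_path_dist_from_start[OF P metric] by (simp add: Q_def x0_def)
  have "measure_pmf.prob carving {Part. real (meeting_blocks Part Q) > t} \<le> 2 * exp (- ln (4/3) * t)"
  proof (cases "Q \<subseteq> {x0}")
    case True
    have "meeting_blocks Part Q \<le> 1" if "Part \<in> set_pmf carving" for Part
      using meeting_blocks_le_1_of_subset_singleton[OF partition_on_carving[OF that] True] .
    then have "set_pmf carving \<inter> {Part. real (meeting_blocks Part Q) > t} = {}"
      using \<open>1 \<le> t\<close> by fastforce
    then show ?thesis by (simp add: measure_pmf_zero_iff[THEN iffD2])
  next
    case False
    then obtain q where "q \<in> Q" "q \<noteq> x0" by auto
    with \<open>Q \<subseteq> X\<close> \<open>x0 \<in> Q\<close> have "\<delta> \<le> d x0 q" by (intro mesh) auto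
    with close \<open>q \<in> Q\<close> have "\<delta> \<le> path_length d P" by fastforce
    then have "measure_pmf.prob carving {Part. real (meeting_blocks Part Q) > t} \<le> 3 * (1/2) powr t"
      using \<open>Q \<subseteq> X\<close> \<open>x0 \<in> Q\<close> close short by (intro carving_meeting_blocks_tail)
    also have "\<dots> \<le> 2 * exp (- ln (4/3) * t)" by (rule three_half_powr_le_exp[OF \<open>1 \<le> t\<close>])
    finally show ?thesis .
  qed
  then show ?thesis by (simp add: degree_sep_eq_meeting_blocks Q_def)
qed

end

definition path_separating_decomposition ::
  "'a set \<Rightarrow> ('a \<Rightarrow> 'a \<Rightarrow> real) \<Rightarrow> real \<Rightarrow> real \<Rightarrow> real \<Rightarrow> 'a set set pmf \<Rightarrow> bool" where
  "path_separating_decomposition X d \<Delta> \<beta> c \<mu> \<longleftrightarrow>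
     (\<forall>Part\<in>set_pmf \<mu>. partition_on X Part) \<and>
     (\<forall>Part\<in>set_pmf \<mu>. \<forall>S\<in>Part. diam d S \<le> \<Delta>) \<and>
     (\<forall>x\<in>X. \<forall>y\<in>X.
        measure_pmf.prob \<mu> {Part. cluster Part x \<noteq> cluster Part y} \<le> \<beta> * d x y / \<Delta>) \<and>
     (\<forall>P t :: real. shortest_path X d P \<and> path_length d P \<le> \<Delta> / \<beta> \<and> t \<ge> 1 \<longrightarrow>
        measure_pmf.prob \<mu> {Part. real (degree_sep P Part) > t} \<le> 2 * exp (- c * t))"

lemma path_separating_decomposition_card_le_1:
  assumes "metric_on X d" "card X \<le> 1" "finite X" "0 \<le> \<Delta>"
  shows "\<exists>\<mu>. path_separating_decomposition X d \<Delta> \<beta> c \<mu>"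
proof -
  obtain a where "X \<subseteq> {a}"
    using assms(2,3) card_le_Suc0_iff_eq[OF assms(3)] by (metis One_nat_def insertI1 subsetI)
  define Part0 where "Part0 = (if X = {} then {} else {X})"
  have part: "partition_on X Part0"
    unfolding Part0_def by (auto simp: partition_on_empty partition_on_space)
  show ?thesis
    unfolding path_separating_decomposition_def
  proof (intro exI[of _ "return_pmf Part0"] conjI ballI allI impI)
    show "partition_on X Part" if "Part \<in> set_pmf (return_pmf Part0)" for Part
      using that part by simp
    show "diam d S \<le> \<Delta>" if "Part \<in> set_pmf (return_pmf Part0)" "S \<in> Part" for Part S
    proof -
      have "S = X" "a \<in> X" using that \<open>X \<subseteq> {a}\<close> by (auto simp: Part0_def split: if_splits)
      with \<open>X \<subseteq> {a}\<close> have "diam d S \<le> 2 * 0"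
        by (intro diam_le_of_subset_ball[OF assms(1)]) (auto simp: metric_on_refl[OF assms(1)])
      then show ?thesis using assms(4) by simp
    qed
  next
    fix x y assume "x \<in> X" "y \<in> X"
    with \<open>X \<subseteq> {a}\<close> have "x = y" by blast
    then show "measure_pmf.prob (return_pmf Part0) {Part. cluster Part x \<noteq> cluster Part y}
        \<le> \<beta> * d x y / \<Delta>"
      using metric_on_refl[OF assms(1) \<open>x \<in> X\<close>] by simp
  next
    fix P and t :: real
    assume asm: "shortest_path X d P \<and> path_length d P \<le> \<Delta> / \<beta> \<and> 1 \<le> t"
    then have "set P \<subseteq> {a}" using \<open>X \<subseteq> {a}\<close> by (auto simp: shortest_path_def)
    then have "meeting_blocks Part0 (set P) \<le> 1"
      by (rule meeting_blocks_le_1_of_subset_singleton[OF part])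
    with asm show "measure_pmf.prob (return_pmf Part0) {Part. real (degree_sep P Part) > t}
        \<le> 2 * exp (- c * t)"
      by (simp add: degree_sep_eq_meeting_blocks indicator_def)
  qed
qed

lemma path_separating_decomposition_card_ge_2:
  assumes "metric_on X d" "2 \<le> card X" "finite X" "0 < \<Delta>"
  shows "\<exists>\<mu>. path_separating_decomposition X d \<Delta> (256 * ln (card X)) (ln (4/3)) \<mu>"
proof -
  define N where "N = real (card X)"
  have "0 < ln N" using assms(2) by (simp add: N_def)
  obtain \<delta> where "0 < \<delta>" and mesh: "\<And>x y. x \<in> X \<Longrightarrow> y \<in> X \<Longrightarrow> x \<noteq> y \<Longrightarrow> \<delta> \<le> d x y"
    using metric_on_finite_min_dist[OF assms(3,1)] by blast
  obtain rp e where rp: "finite (set_pmf rp)" "\<forall>r\<in>set_pmf rp. 0 \<le> r \<and> r \<le> \<Delta>/2"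
    and e: "0 \<le> e" "N * e \<le> 1" and mem: "\<And>D. \<delta> \<le> D \<Longrightarrow> nearly_memoryless rp (8 * ln N / \<Delta>) D e"
    using exists_nearly_memoryless_radii[of N \<Delta> \<delta>] assms(2,4) \<open>0 < \<delta>\<close> by (auto simp: N_def)
  obtain centres where "set centres = X" "distinct centres"
    using finite_distinct_list[OF assms(3)] by blast
  interpret ball_carving X d centres rp "8 * ln N / \<Delta>" \<delta> e
    using assms(1,4) \<open>0 < ln N\<close> rp mesh mem e \<open>set centres = X\<close> \<open>distinct centres\<close>
    by unfold_locales (auto simp: N_def)
  show ?thesis
    unfolding path_separating_decomposition_def N_def[symmetric]
  proof (intro exI[of _ carving] conjI ballI allI impI)
    show "partition_on X Part" if "Part \<in> set_pmf carving" for Part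
      using partition_on_carving[OF that] .
    show "diam d S \<le> \<Delta>" if "Part \<in> set_pmf carving" "S \<in> Part" for Part S
      using carving_diam_le[OF that, of "\<Delta>/2"] rp by simp
  next
    fix x y assume "x \<in> X" "y \<in> X"
    then have "measure_pmf.prob carving {Part. cluster Part x \<noteq> cluster Part y}
        \<le> 16 * ln N * d x y / \<Delta>"
      using carving_separation_prob by (simp add: algebra_simps)
    also have "\<dots> \<le> 256 * ln N * d x y / \<Delta>"
      using \<open>0 < ln N\<close> \<open>0 < \<Delta>\<close> metric_on_nonneg[OF assms(1) \<open>x \<in> X\<close> \<open>y \<in> X\<close>]
      by (intro divide_right_mono mult_right_mono) auto
    finally show "measure_pmf.prob carving {Part. cluster Part x \<noteq> cluster Part y}
        \<le> 256 * ln N * d x y / \<Delta>" .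
  next
    fix P and t :: real
    assume asm: "shortest_path X d P \<and> path_length d P \<le> \<Delta> / (256 * ln N) \<and> 1 \<le> t"
    then have "8 * ln N / \<Delta> * path_length d P \<le> 8 * ln N / \<Delta> * (\<Delta> / (256 * ln N))"
      using \<open>0 < ln N\<close> \<open>0 < \<Delta>\<close> by (intro mult_left_mono) auto
    then have "8 * ln N / \<Delta> * path_length d P \<le> 1/32"
      using \<open>0 < ln N\<close> \<open>0 < \<Delta>\<close> by simp
    with asm show "measure_pmf.prob carving {Part. real (degree_sep P Part) > t} \<le> 2 * exp (- ln (4/3) * t)"
      using carving_degree_sep_tail by blast
  qed
qed

theorem theorem2:
  shows "\<exists>C c :: real. C > 0 \<and> c > 0 \<and>
    (\<forall>(X :: nat set) (d :: nat \<Rightarrow> nat \<Rightarrow> real) (\<Delta> :: real).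
      finite X \<and> metric_on X d \<and> \<Delta> > 0 \<longrightarrow>
      (let \<beta> = C * ln (real (card X)) in
       \<exists>\<mu> :: nat set set pmf.
         (\<forall>Part\<in>set_pmf \<mu>. partition_on X Part) \<and>
         (\<forall>Part\<in>set_pmf \<mu>. \<forall>S\<in>Part. diam d S \<le> \<Delta>) \<and>
         (\<forall>x\<in>X. \<forall>y\<in>X.
            measure_pmf.prob \<mu> {Part. cluster Part x \<noteq> cluster Part y} \<le> \<beta> * d x y / \<Delta>) \<and>
         (\<forall>P t :: real. shortest_path X d P \<and> path_length d P \<le> \<Delta> / \<beta> \<and> t \<ge> 1 \<longrightarrow>
            measure_pmf.prob \<mu> {Part. real (degree_sep P Part) > t} \<le> 2 * exp (- c * t))))"
proof -
  have "\<exists>\<mu>. path_separating_decomposition X d \<Delta> (256 * ln (real (card X))) (ln (4/3)) \<mu>"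
    if "finite X" "metric_on X d" "0 < \<Delta>" for X :: "nat set" and d \<Delta>
  proof (cases "card X \<le> 1")
    case True
    with that show ?thesis by (intro path_separating_decomposition_card_le_1) auto
  next
    case False
    with that show ?thesis by (intro path_separating_decomposition_card_ge_2) auto
  qed
  then show ?thesis
    unfolding path_separating_decomposition_def Let_def
    by (intro exI[of _ 256] exI[of _ "ln (4/3)"]) auto
qed

end
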